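(* $SN_{d\beta}=ISN_{d\beta}$, i.e. a term $t\in\mathtt T_J$ is strongly normalizing for $\to_{d\beta}$ if and only if $t\in ISN_{d\beta}$.
   Context: Terms $\mathtt T_J$: $t,u,r ::= x \mid \lambda x.t \mid t(u,y.r)$ ($y$ bound in $r$), up to $\alpha$-equivalence; $\{u/x\}t$ capture-avoiding substitution. List contexts $\mathtt D ::= \Diamond \mid t(u,y.\mathtt D)$. Distant beta: $\mathtt D\langle\lambda x.t\rangle(u,y.r) \mapsto_{d\beta} \{\{u/x\}\mathtt D\langle t\rangle/y\}r$ (variables bound by $\mathtt D$ not free in $u$, $x$ not in $\mathtt D$), $\to_{d\beta}$ its closure under all contexts; $SN_{d\beta}$ is the set of terms with no infinite $\to_{d\beta}$-sequence. Neutral terms $\mathtt n ::= x \mid \mathtt n(u,y.\mathtt n)$; answers $\mathtt a ::= \lambda x.t \mid \mathtt n(u,y.\mathtt a)$; neutral list contexts $\mathtt D_n ::= \Diamond \mid \mathtt n(u,y.\mathtt D_n)$; weak-head contexts $\mathtt W ::= \Diamond \mid \mathtt W(u,y.r) \mid \mathtt n(u,y.\mathtt W)$. $ISN_{d\beta}$ is the smallest set of terms closed under the rules: (snvar) $x\in ISN_{d\beta}$; (snabs) if $t\in ISN_{d\beta}$ then $\lambda x.t\in ISN_{d\beta}$; (snapp) if $\mathtt n,u,r\in ISN_{d\beta}$ with $\mathtt n$ neutral and $r\in\mathtt n\cup\mathtt a$, then $\mathtt n(u,y.r)\in ISN_{d\beta}$; (snbeta) if $\mathtt W\langle\{\{u/x\}\mathtt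 D_n\langle s\rangle/y\}r\rangle\in ISN_{d\beta}$, $\mathtt D_n\langle s\rangle\in ISN_{d\beta}$ and $u\in ISN_{d\beta}$, then $\mathtt W\langle\mathtt D_n\langle\lambda x.s\rangle(u,y.r)\rangle\in ISN_{d\beta}$. *)

theory Defs
  imports Main
begin

text \<open>Terms of the lambda-J calculus in de Bruijn representation (terms up to
alpha-equivalence). In JApp t u r, the third argument binds one variable (y).\<close>

datatype trm = Var nat | Lam trm | JApp trm trm trm

fun dB_lift :: "trm \<Rightarrow> nat \<Rightarrow> trm" where
  "dB_lift (Var i) k = (if i < k then Var i else Var (Suc i))"
| "dB_lift (Lam t) k = Lam (dB_lift t (Suc k))"
| "dB_lift (JApp t u r) k = JApp (dB_lift t k) (dB_lift u k) (dB_lift r (Suc k))"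

fun dB_subst :: "trm \<Rightarrow> nat \<Rightarrow> trm \<Rightarrow> trm" where
  "dB_subst (Var i) k s = (if k < i then Var (i - 1) else if i = k then s else Var i)"
| "dB_subst (Lam t) k s = Lam (dB_subst t (Suc k) (dB_lift s 0))"
| "dB_subst (JApp t u r) k s =
     JApp (dB_subst t k s) (dB_subst u k s) (dB_subst r (Suc k) (dB_lift s 0))"

definition dB_liftn :: "nat \<Rightarrow> trm \<Rightarrow> trm" where
  "dB_liftn n u = ((\<lambda>x. dB_lift x 0) ^^ n) u"

text \<open>List contexts D ::= Hole | t(u, y.D): represented as the list of the pairs (t,u)
from the outside in; the hole lies under length D binders.\<close>
type_synonym lctx = "(trm \<times> trm) list"

fun plugD :: "lctx \<Rightarrow> trm \<Rightarrow> trm" where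
  "plugD [] s = s"
| "plugD ((t, u) # D) s = JApp t u (plugD D s)"

text \<open>contrD D t u = {u/x} D<t>, where x is the variable bound by the removed lambda
(index 0 of t); u is lifted over the binders of D (which are not free in u).\<close>
definition contrD :: "lctx \<Rightarrow> trm \<Rightarrow> trm \<Rightarrow> trm" where
  "contrD D t u = plugD D (dB_subst t 0 (dB_liftn (length D) u))"

inductive dbeta :: "trm \<Rightarrow> trm \<Rightarrow> bool" where
  root: "dbeta (JApp (plugD D (Lam t)) u r) (dB_subst r 0 (contrD D t u))"
| lam: "dbeta t t' \<Longrightarrow> dbeta (Lam t) (Lam t')"
| app1: "dbeta t t' \<Longrightarrow> dbeta (JApp t u r) (JApp t' u r)"
| app2: "dbeta u u' \<Longrightarrow> dbeta (JApp t u r) (JApp t u' r)"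
| app3: "dbeta r r' \<Longrightarrow> dbeta (JApp t u r) (JApp t u r')"

definition SN_dbeta :: "trm \<Rightarrow> bool" where
  "SN_dbeta t \<longleftrightarrow> \<not> (\<exists>f. f 0 = t \<and> (\<forall>i. dbeta (f i) (f (Suc i))))"

inductive neutral :: "trm \<Rightarrow> bool" where
  "neutral (Var i)"
| "neutral n \<Longrightarrow> neutral n' \<Longrightarrow> neutral (JApp n u n')"

inductive answer :: "trm \<Rightarrow> bool" where
  "answer (Lam t)"
| "neutral n \<Longrightarrow> answer a \<Longrightarrow> answer (JApp n u a)"

definition neutral_ctx :: "lctx \<Rightarrow> bool" where
  "neutral_ctx D \<longleftrightarrow> (\<forall>p \<in> set D. neutral (fst p))"

datatype wctx = WHole | WLeft wctx trm trm | WRight trm trm wctx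

fun plugW :: "wctx \<Rightarrow> trm \<Rightarrow> trm" where
  "plugW WHole s = s"
| "plugW (WLeft W u r) s = JApp (plugW W s) u r"
| "plugW (WRight n u W) s = JApp n u (plugW W s)"

fun wh_ctx :: "wctx \<Rightarrow> bool" where
  "wh_ctx WHole = True"
| "wh_ctx (WLeft W u r) = wh_ctx W"
| "wh_ctx (WRight n u W) = (neutral n \<and> wh_ctx W)"

fun liftD :: "nat \<Rightarrow> lctx \<Rightarrow> lctx" where
  "liftD k [] = []"
| "liftD k ((t, u) # D) = (dB_lift t k, dB_lift u k) # liftD (Suc k) D"

text \<open>open_body D s: the term D<s> in which x (bound by the lambda in D<\<lambda>x.s>) is free;
in de Bruijn form x becomes the new outermost free variable (index 0), i.e.
D<s> = {x/x}D<s> computed from the lifted term lift(D<\<lambda>x.s>).\<close>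
definition open_body :: "lctx \<Rightarrow> trm \<Rightarrow> trm" where
  "open_body D s = contrD (liftD 0 D) (dB_lift s (Suc (length D))) (Var 0)"

inductive ISN :: "trm \<Rightarrow> bool" where
  snvar: "ISN (Var i)"
| snabs: "ISN t \<Longrightarrow> ISN (Lam t)"
| snapp: "ISN n \<Longrightarrow> ISN u \<Longrightarrow> ISN r \<Longrightarrow> neutral n \<Longrightarrow> neutral r \<or> answer r
           \<Longrightarrow> ISN (JApp n u r)"
| snbeta: "wh_ctx W \<Longrightarrow> neutral_ctx D \<Longrightarrow>
           ISN (plugW W (dB_subst r 0 (contrD D s u))) \<Longrightarrow>
           ISN (open_body D s) \<Longrightarrow> ISN u \<Longrightarrow>
           ISN (plugW W (JApp (plugD D (Lam s)) u r))"

end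

theory Submission
  imports Defs "HOL-Library.Multiset" "HOL-Library.Function_Algebras"
begin

text \<open>
  SN implies ISN: a strongly normalising term is accessible for the converse of reduction.
  We induct on accessibility and, inside, on size along the component relation, whose
  steps go to immediate subterms and from an answer \<open>D\<langle>\<lambda>x.s\<rangle>\<close> to its opened
  body \<open>D\<langle>s\<rangle>\<close>. Reductions of a component are simulated by reductions of the whole
  term, and every premise of an ISN rule is a component or a reduct.

  ISN implies SN: we type terms with non-idempotent intersection types, counting the size
  of derivations. By a substitution lemma this size strictly decreases under reduction, so
  typable terms are strongly normalising. Conversely ISN terms are typable (neutral ones at
  every type) by induction on ISN, where the rule snbeta is subject expansion, proved by
  anti-substitution.
\<close>

lemma length_liftD [simp]: "length (liftD k D) = length D"
  by (induction k D rule: liftD.induct) auto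

lemma dB_lift_plugD: "dB_lift (plugD D t) k = plugD (liftD k D) (dB_lift t (k + length D))"
  by (induction D arbitrary: k) auto

lemma contrD_Nil: "contrD [] t u = dB_subst t 0 u"
  by (simp add: contrD_def dB_liftn_def)

lemma contrD_Cons: "contrD ((a, b) # D) t u = JApp a b (contrD D t (dB_lift u 0))"
  by (simp add: contrD_def dB_liftn_def funpow_Suc_right del: funpow.simps)

section \<open>Renamings\<close>

definition ren_under :: "nat \<Rightarrow> (nat \<Rightarrow> nat) \<Rightarrow> nat \<Rightarrow> nat" where
  "ren_under k f i = (if i < k then i else k + f (i - k))"

fun rename :: "(nat \<Rightarrow> nat) \<Rightarrow> trm \<Rightarrow> trm" where
  "rename f (Var i) = Var (f i)"
| "rename f (Lam t) = Lam (rename (ren_under 1 f) t)"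
| "rename f (JApp t u r) = JApp (rename f t) (rename f u) (rename (ren_under 1 f) r)"

lemma ren_under_0 [simp]: "ren_under 0 f = f"
  by (simp add: ren_under_def fun_eq_iff)

lemma ren_under_ren_under [simp]: "ren_under m (ren_under k f) = ren_under (m + k) f"
  by (auto simp add: ren_under_def fun_eq_iff)

lemma ren_under_comp: "ren_under k f \<circ> ren_under k g = ren_under k (f \<circ> g)"
  by (auto simp add: ren_under_def fun_eq_iff)

lemma ren_under_id [simp]: "ren_under k (\<lambda>i. i) = (\<lambda>i. i)"
  by (simp add: ren_under_def fun_eq_iff)

lemma rename_rename: "rename f (rename g t) = rename (f \<circ> g) t"
  by (induction t arbitrary: f g) (simp_all add: ren_under_comp)

lemma rename_id [simp]: "rename (\<lambda>i. i) t = t"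
  by (induction t) simp_all

lemma rename_cong: "(\<And>i. f i = g i) \<Longrightarrow> rename f t = rename g t"
  by (metis ext)

lemma size_rename [simp]: "size (rename f t) = size t"
  by (induction t arbitrary: f) auto

lemma dB_lift_eq_rename: "dB_lift t k = rename (\<lambda>i. if i < k then i else Suc i) t"
  by (induction t arbitrary: k) (auto simp: ren_under_def intro!: rename_cong)

lemma dB_subst_Var_eq_rename:
  "dB_subst t k (Var j) = rename (\<lambda>i. if k < i then i - 1 else if i = k then j else i) t"
  by (induction t arbitrary: k j) (auto simp: ren_under_def intro!: rename_cong)

lemma dB_liftn_eq_rename: "dB_liftn n u = rename (\<lambda>i. i + n) u"
proof (induction n arbitrary: u)
  case (Suc n)
  have "dB_liftn (Suc n) u = dB_lift (dB_liftn n u) 0"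
    by (simp add: dB_liftn_def)
  with Suc show ?case
    by (simp add: dB_lift_eq_rename rename_rename o_def)
qed (simp add: dB_liftn_def)

lemma rename_dB_lift0:
  "rename (ren_under (Suc k) f) (dB_lift u 0) = dB_lift (rename (ren_under k f) u) 0"
  by (simp add: dB_lift_eq_rename rename_rename o_def) (rule rename_cong, simp add: ren_under_def)

lemma rename_dB_subst:
  "rename (ren_under k f) (dB_subst t k u) =
   dB_subst (rename (ren_under (Suc k) f) t) k (rename (ren_under k f) u)"
  by (induction t arbitrary: k u) (auto simp add: ren_under_def rename_dB_lift0)

lemma rename_dB_subst0:
  "rename f (dB_subst t 0 u) = dB_subst (rename (ren_under 1 f) t) 0 (rename f u)"
  using rename_dB_subst[of 0 f t u] by simp

lemma rename_dB_liftn: "rename (ren_under n f) (dB_liftn n u) = dB_liftn n (rename f u)"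
  by (simp add: dB_liftn_eq_rename rename_rename o_def ren_under_def add.commute)

fun rename_lctx :: "(nat \<Rightarrow> nat) \<Rightarrow> lctx \<Rightarrow> lctx" where
  "rename_lctx f [] = []"
| "rename_lctx f ((t, u) # D) = (rename f t, rename f u) # rename_lctx (ren_under 1 f) D"

lemma length_rename_lctx [simp]: "length (rename_lctx f D) = length D"
  by (induction f D rule: rename_lctx.induct) auto

lemma rename_plugD:
  "rename f (plugD D s) = plugD (rename_lctx f D) (rename (ren_under (length D) f) s)"
  by (induction f D arbitrary: s rule: rename_lctx.induct) simp_all

lemma rename_contrD:
  "rename f (contrD D t u) =
   contrD (rename_lctx f D) (rename (ren_under (Suc (length D)) f) t) (rename f u)"
  by (simp add: contrD_def rename_plugD rename_dB_subst0 rename_dB_liftn)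

lemma dbeta_rename: "dbeta t t' \<Longrightarrow> dbeta (rename f t) (rename f t')"
proof (induction arbitrary: f rule: dbeta.induct)
  case (root D t u r)
  have "rename f (JApp (plugD D (Lam t)) u r) =
        JApp (plugD (rename_lctx f D) (Lam (rename (ren_under (Suc (length D)) f) t)))
             (rename f u) (rename (ren_under 1 f) r)"
    by (simp add: rename_plugD)
  moreover have "rename f (dB_subst r 0 (contrD D t u)) =
     dB_subst (rename (ren_under 1 f) r) 0
       (contrD (rename_lctx f D) (rename (ren_under (Suc (length D)) f) t) (rename f u))"
    by (simp add: rename_dB_subst0 rename_contrD)
  ultimately show ?case
    by (simp add: dbeta.root)
qed (auto intro: dbeta.intros)

lemma neutral_rename: "neutral t \<Longrightarrow> neutral (rename f t)"
  by (induction t arbitrary: f rule: neutral.induct) (auto intro: neutral.intros)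

inductive_cases neutral_JAppE: "neutral (JApp t u r)"
inductive_cases neutral_LamE: "neutral (Lam t)"
inductive_cases dbeta_VarE: "dbeta (Var i) t'"

lemma dbeta_JAppE:
  assumes "dbeta (JApp t u r) X"
  obtains (root) D s where "t = plugD D (Lam s)" "X = dB_subst r 0 (contrD D s u)"
  | (app1) t' where "dbeta t t'" "X = JApp t' u r"
  | (app2) u' where "dbeta u u'" "X = JApp t u' r"
  | (app3) r' where "dbeta r r'" "X = JApp t u r'"
  using assms by (cases rule: dbeta.cases) auto

lemma not_neutral_plugD_Lam: "\<not> neutral (plugD D (Lam s))"
  by (induction D) (auto elim: neutral_JAppE neutral_LamE)

lemma not_neutral_plugW_redex: "\<not> neutral (plugW W (JApp (plugD D (Lam s)) u r))"
  by (induction W) (auto elim!: neutral_JAppE simp: not_neutral_plugD_Lam)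

lemma neutral_dbeta: "neutral t \<Longrightarrow> dbeta t t' \<Longrightarrow> neutral t'"
proof (induction t arbitrary: t' rule: neutral.induct)
  case (1 i)
  then show ?case by (auto elim: dbeta_VarE)
next
  case (2 n n' u)
  from 2(5) show ?case
  proof (cases rule: dbeta_JAppE)
    case root
    then show ?thesis using 2(1) not_neutral_plugD_Lam by metis
  qed (auto intro: neutral.intros 2)
qed

lemma answer_plugD: "answer a \<Longrightarrow> \<exists>D s. a = plugD D (Lam s) \<and> neutral_ctx D"
proof (induction rule: answer.induct)
  case (1 t)
  show ?case by (rule exI[of _ "[]"]) (simp add: neutral_ctx_def)
next
  case (2 n a u)
  then obtain D s where "a = plugD D (Lam s)" "neutral_ctx D" by blast
  with 2 show ?case by (intro exI[of _ "(n, u) # D"]) (auto simp: neutral_ctx_def)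
qed

lemma neutral_or_answer_or_redex:
  "neutral t \<or> answer t \<or>
   (\<exists>W D s u r. wh_ctx W \<and> neutral_ctx D \<and> t = plugW W (JApp (plugD D (Lam s)) u r))"
proof (induction t)
  case (Var i)
  then show ?case by (auto intro: neutral.intros)
next
  case (Lam t)
  then show ?case by (auto intro: answer.intros)
next
  case (JApp t u r)
  from JApp.IH(1) show ?case
  proof (elim disjE exE conjE)
    assume t: "neutral t"
    from JApp.IH(3) show ?thesis
    proof (elim disjE exE conjE)
      fix W D s u' r'
      assume "wh_ctx W" "neutral_ctx D" "r = plugW W (JApp (plugD D (Lam s)) u' r')"
      with t show ?thesis
        by (intro disjI2 exI[of _ "WRight t u W"]) auto
    qed (use t in \<open>auto intro: neutral.intros answer.intros\<close>)
  next
    assume "answer t"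
    then obtain D s where "t = plugD D (Lam s)" "neutral_ctx D"
      using answer_plugD by blast
    then show ?thesis by (intro disjI2 exI[of _ WHole]) auto
  next
    fix W D s u' r'
    assume "wh_ctx W" "neutral_ctx D" "t = plugW W (JApp (plugD D (Lam s)) u' r')"
    then show ?thesis by (intro disjI2 exI[of _ "WLeft W u r"]) auto
  qed
qed

lemma dbeta_plugW: "dbeta X Y \<Longrightarrow> dbeta (plugW W X) (plugW W Y)"
  by (induction W) (auto intro: dbeta.intros)

lemma SN_dbeta_termip: "SN_dbeta t \<Longrightarrow> termip dbeta t"
proof (rule ccontr)
  let ?acc = "termip dbeta"
  assume sn: "SN_dbeta t" and "\<not> ?acc t"
  define next_nonacc where "next_nonacc x = (SOME y. dbeta x y \<and> \<not> ?acc y)" for x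
  have next_nonacc: "dbeta x (next_nonacc x) \<and> \<not> ?acc (next_nonacc x)" if "\<not> ?acc x" for x
    using not_accp_down[OF that] unfolding next_nonacc_def by (rule someI_ex) blast
  define f where "f n = (next_nonacc ^^ n) t" for n
  have "\<not> ?acc (f n)" for n
    by (induction n) (simp_all add: f_def \<open>\<not> ?acc t\<close> next_nonacc del: conversep_iff)
  then have "dbeta (f n) (f (Suc n))" for n
    using next_nonacc by (simp add: f_def)
  moreover have "f 0 = t" by (simp add: f_def)
  ultimately show False
    using sn unfolding SN_dbeta_def by blast
qed

section \<open>Components\<close>

text \<open>Walking down the spine of \<open>D\<langle>s\<rangle>\<close>, \<^term>\<open>close_body i m\<close> removes the variable
x (index i below i binders) from the left parts of \<open>D\<close> and binds it again by a \<lambda> at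
the hole.\<close>

definition bind_var :: "nat \<Rightarrow> nat \<Rightarrow> nat" where
  "bind_var i j = (if j < i then Suc j else if j = i then 0 else j)"

definition drop_var :: "nat \<Rightarrow> nat \<Rightarrow> nat" where
  "drop_var i j = (if j < i then j else j - 1)"

fun close_body :: "nat \<Rightarrow> nat \<Rightarrow> trm \<Rightarrow> trm" where
  "close_body i 0 X = Lam (rename (bind_var i) X)"
| "close_body i (Suc m) (JApp t u r) =
     JApp (rename (drop_var i) t) (rename (drop_var i) u) (close_body (Suc i) m r)"
| "close_body i (Suc m) X = X"

fun neutral_spine :: "nat \<Rightarrow> trm \<Rightarrow> bool" where
  "neutral_spine 0 X = True"
| "neutral_spine (Suc m) (JApp t u r) = (neutral t \<and> neutral_spine m r)"
| "neutral_spine (Suc m) X = False"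

lemma close_body_plugD_liftD:
  "close_body i (length D)
     (plugD (liftD i D) (dB_subst (dB_lift s (Suc (i + length D))) 0 (Var (i + length D))))
   = plugD D (Lam s)"
proof (induction D arbitrary: i)
  case Nil
  have "rename (bind_var i) (dB_subst (dB_lift s (Suc i)) 0 (Var i)) = s"
    by (simp add: dB_subst_Var_eq_rename dB_lift_eq_rename rename_rename o_def)
       (rule trans[OF rename_cong rename_id], auto simp: bind_var_def)
  then show ?case by simp
next
  case (Cons p D)
  have "rename (drop_var i) (dB_lift t i) = t" for t
    by (simp add: dB_lift_eq_rename rename_rename o_def)
       (rule trans[OF rename_cong rename_id], auto simp: drop_var_def)
  with Cons[of "Suc i"] show ?case by (cases p) simp
qed

lemma close_body_open_body: "close_body 0 (length D) (open_body D s) = plugD D (Lam s)"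
  using close_body_plugD_liftD[of 0 D s]
  by (simp add: open_body_def contrD_def dB_liftn_eq_rename)

lemma neutral_spine_plugD_liftD: "neutral_ctx D \<Longrightarrow> neutral_spine (length D) (plugD (liftD i D) S)"
proof (induction D arbitrary: i)
  case (Cons p D)
  then show ?case
    by (cases p) (simp add: neutral_ctx_def dB_lift_eq_rename neutral_rename)
qed simp

lemma neutral_spine_open_body: "neutral_ctx D \<Longrightarrow> neutral_spine (length D) (open_body D s)"
  unfolding open_body_def contrD_def using neutral_spine_plugD_liftD[of D 0] by simp

lemma dbeta_close_body:
  "neutral_spine m X \<Longrightarrow> dbeta X X' \<Longrightarrow>
   neutral_spine m X' \<and> dbeta (close_body i m X) (close_body i m X')"
proof (induction m arbitrary: i X X')
  case 0
  then show ?case by (auto intro: dbeta.intros dbeta_rename)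
next
  case (Suc m)
  then obtain t u r where X: "X = JApp t u r" "neutral t" "neutral_spine m r"
    by (cases X) auto
  from Suc.prems(2) X(1) have "dbeta (JApp t u r) X'" by simp
  then show ?case
  proof (cases rule: dbeta_JAppE)
    case root
    then show ?thesis using X(2) not_neutral_plugD_Lam by metis
  next
    case (app1 t')
    then show ?thesis using X neutral_dbeta by (auto intro: dbeta.intros dbeta_rename)
  next
    case (app2 u')
    then show ?thesis using X by (auto intro: dbeta.intros dbeta_rename)
  next
    case (app3 r')
    then show ?thesis using X Suc.IH by (auto intro: dbeta.intros)
  qed
qed

lemma size_less_close_body: "neutral_spine m X \<Longrightarrow> size X < size (close_body i m X)"
  by (induction i m X rule: close_body.induct) auto

inductive component :: "trm \<Rightarrow> trm \<Rightarrow> bool" where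
  Lam_body: "component t (Lam t)"
| JApp_fun: "component t (JApp t u r)"
| JApp_arg: "component u (JApp t u r)"
| JApp_cont: "component r (JApp t u r)"
| opened_body: "neutral_spine m X \<Longrightarrow> component X (close_body i m X)"

lemma component_open_body: "neutral_ctx D \<Longrightarrow> component (open_body D s) (plugD D (Lam s))"
  using component.opened_body[OF neutral_spine_open_body, where i=0]
  by (simp add: close_body_open_body)

lemma component_size_less: "component a b \<Longrightarrow> size a < size b"
  by (induction rule: component.induct) (auto simp: size_less_close_body)

lemma components_size_less: "component\<^sup>+\<^sup>+ a b \<Longrightarrow> size a < size b"
  by (induction rule: tranclp_induct) (auto dest: component_size_less)

lemma component_dbeta_sim: "component a b \<Longrightarrow> dbeta a a' \<Longrightarrow> \<exists>b'. dbeta b b' \<and> component a' b'"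
proof (induction rule: component.induct)
  case (opened_body m X i)
  then show ?case using dbeta_close_body by (meson component.opened_body)
qed (auto intro: dbeta.intros component.intros)

lemma components_dbeta_sim:
  "component\<^sup>*\<^sup>* a b \<Longrightarrow> dbeta a a' \<Longrightarrow> \<exists>b'. dbeta b b' \<and> component\<^sup>*\<^sup>* a' b'"
proof (induction rule: rtranclp_induct)
  case (step y z)
  then obtain y' where "dbeta y y'" "component\<^sup>*\<^sup>* a' y'" by blast
  moreover obtain z' where "dbeta z z'" "component y' z'"
    using component_dbeta_sim[OF step(2) \<open>dbeta y y'\<close>] by blast
  ultimately show ?case by (meson rtranclp.rtrancl_into_rtrancl)
qed blast

lemma components_plugW: "component\<^sup>*\<^sup>* X (plugW W X)"
  by (induction W) (simp_all add: rtranclp.rtrancl_into_rtrancl component.intros)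

section \<open>Strongly normalising terms are inductively strongly normalising\<close>

lemma ISN_if_component_of_termip:
  assumes "termip dbeta t" and "component\<^sup>*\<^sup>* x t"
  shows "ISN x"
  using assms
proof (induction arbitrary: x rule: Wellfounded.accp.induct)
  case (accI t)
  show ?case using accI.prems
  proof (induction x rule: measure_induct_rule[where f=size])
    case (less x)
    have descendant: "ISN y" if "component\<^sup>+\<^sup>+ y x" for y
      using less.IH components_size_less[OF that] that less.prems
      by (meson rtranclp_trans tranclp_into_rtranclp)
    have immediate_component: "ISN y" if "component y x" for y
      using descendant[OF tranclp.r_into_trancl[of component, OF that]] .
    have reduct: "ISN y" if "dbeta x y" for y
      using components_dbeta_sim[OF less.prems that] accI.IH by blast
    from neutral_or_answer_or_redex[of x] show ?case
    proof (elim disjE exE conjE)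
      assume "neutral x"
      then show ?thesis
        by (cases rule: neutral.cases)
          (use immediate_component in \<open>auto intro!: ISN.snvar ISN.snapp intro: component.intros\<close>)
    next
      assume "answer x"
      then show ?thesis
        by (cases rule: answer.cases)
          (use immediate_component in \<open>auto intro!: ISN.snabs ISN.snapp intro: component.intros\<close>)
    next
      fix W D s u r
      assume W: "wh_ctx W" and D: "neutral_ctx D" and x: "x = plugW W (JApp (plugD D (Lam s)) u r)"
      have redex: "component\<^sup>*\<^sup>* (JApp (plugD D (Lam s)) u r) x"
        using x components_plugW by simp
      have "component\<^sup>+\<^sup>+ (open_body D s) (JApp (plugD D (Lam s)) u r)"
        using component_open_body[OF D] component.JApp_fun
        by (meson tranclp.r_into_trancl tranclp.trancl_into_trancl)
      then have "ISN (open_body D s)"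
        using redex by (meson descendant tranclp_rtranclp_tranclp)
      moreover have "ISN u"
        using redex component.JApp_arg by (meson descendant rtranclp_into_tranclp2)
      moreover have "ISN (plugW W (dB_subst r 0 (contrD D s u)))"
        using reduct x by (simp add: dbeta_plugW dbeta.root)
      ultimately show ?thesis using x W D by (simp add: ISN.snbeta)
    qed
  qed
qed

lemma SN_dbeta_imp_ISN: "SN_dbeta t \<Longrightarrow> ISN t"
  using ISN_if_component_of_termip[OF SN_dbeta_termip] by blast

section \<open>Quantitative types\<close>

datatype ty = Base | Arrow "ty multiset" ty

type_synonym tctx = "nat \<Rightarrow> ty multiset"

definition ctx_single :: "nat \<Rightarrow> ty \<Rightarrow> tctx" where
  "ctx_single i s = (\<lambda>j. if j = i then {#s#} else {#})"

definition ctx_drop :: "nat \<Rightarrow> tctx \<Rightarrow> tctx" where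
  "ctx_drop k G = (\<lambda>i. if i < k then G i else G (Suc i))"

definition ctx_lift :: "nat \<Rightarrow> tctx \<Rightarrow> tctx" where
  "ctx_lift k G = (\<lambda>i. if i < k then G i else if i = k then {#} else G (i - 1))"

definition ctx_sub :: "tctx \<Rightarrow> tctx \<Rightarrow> bool" where
  "ctx_sub G H \<longleftrightarrow> (\<forall>i. G i \<subseteq># H i)"

definition arrows :: "(ty multiset \<times> ty) multiset \<Rightarrow> ty multiset" where
  "arrows P = image_mset (\<lambda>(M, s). Arrow M s) P"

text \<open>Non-idempotent intersection types with the size of derivations as last argument.
A context records one type for each use of a variable, so contexts are added pointwise.
In the rule for \<open>t(u, y.r)\<close> the pairs \<open>(M, s)\<close> in \<open>P\<close> are the arrow types used for
\<open>t\<close>; their targets type \<open>y\<close> in \<open>r\<close> and their sources must be provided by \<open>u\<close>. The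
inclusions (instead of equalities) make typing stable under erasing reductions, and the
nonempty multisets \<open>A\<close> and \<open>B\<close> force \<open>t\<close> and \<open>u\<close> to be typed.\<close>

inductive typing :: "tctx \<Rightarrow> trm \<Rightarrow> ty \<Rightarrow> nat \<Rightarrow> bool"
  and mtyping :: "tctx \<Rightarrow> trm \<Rightarrow> ty multiset \<Rightarrow> nat \<Rightarrow> bool" where
  var: "typing (ctx_single i s) (Var i) s 1"
| lam: "typing G t s n \<Longrightarrow> G 0 \<subseteq># M \<Longrightarrow> typing (ctx_drop 0 G) (Lam t) (Arrow M s) (Suc n)"
| app: "mtyping G t A n1 \<Longrightarrow> A \<noteq> {#} \<Longrightarrow> mtyping H u B n2 \<Longrightarrow> B \<noteq> {#} \<Longrightarrow>
    typing L r s n3 \<Longrightarrow> arrows P \<subseteq># A \<Longrightarrow> L 0 \<subseteq># image_mset snd P \<Longrightarrow>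
    sum_mset (image_mset fst P) \<subseteq># B \<Longrightarrow>
    typing (G + H + ctx_drop 0 L) (JApp t u r) s (Suc (n1 + n2 + n3))"
| mnil: "mtyping 0 t {#} 0"
| mcons: "typing G t s n \<Longrightarrow> mtyping H t A m \<Longrightarrow> mtyping (G + H) t (add_mset s A) (n + m)"

definition has_type :: "trm \<Rightarrow> ty \<Rightarrow> bool" where
  "has_type t s \<longleftrightarrow> (\<exists>G n. typing G t s n)"

definition typable :: "trm \<Rightarrow> bool" where
  "typable t \<longleftrightarrow> (\<exists>s. has_type t s)"

inductive_cases typing_VarE: "typing G (Var i) s n"
inductive_cases typing_LamE: "typing G (Lam t) s n"
inductive_cases typing_JAppE: "typing G (JApp t u r) s n"
inductive_cases mtypingE: "mtyping G t A n"

lemma mtyping_induct [consumes 1, case_names nil cons]: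
  assumes "mtyping G t A n" and "P 0 {#} 0"
    and "\<And>G s n H A m. typing G t s n \<Longrightarrow> mtyping H t A m \<Longrightarrow> P H A m \<Longrightarrow>
           P (G + H) (add_mset s A) (n + m)"
  shows "P G A n"
proof -
  have "(typing G1 t1 s1 n1 \<longrightarrow> True) \<and> (mtyping G t' A n \<longrightarrow> t' = t \<longrightarrow> P G A n)"
    for G1 t1 s1 n1 t'
    by (rule typing_mtyping.induct[where ?P1.0="\<lambda>_ _ _ _. True"
          and ?P2.0="\<lambda>G t' A n. t' = t \<longrightarrow> P G A n"]) (use assms in auto)
  with assms(1) show ?thesis by blast
qed

text \<open>The pointwise rules are only used at explicit arguments: as simplification rules
they would be eta-contracted and unfold every sum of contexts into a \<lambda>-term.\<close>

declare plus_fun_apply [simp del] zero_fun_apply [simp del]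

lemma ctx_add_apply_0 [simp]: "(G + H) 0 = G 0 + H 0"
  and ctx_add_apply_Suc [simp]: "(G + H) (Suc i) = G (Suc i) + H (Suc i)"
  and ctx_zero_apply_0 [simp]: "(0 :: tctx) 0 = {#}"
  and ctx_zero_apply_Suc [simp]: "(0 :: tctx) (Suc i) = {#}"
  by (simp_all add: plus_fun_apply zero_fun_apply)

lemma ctx_drop_add [simp]: "ctx_drop k (G + H) = ctx_drop k G + ctx_drop k H"
  by (simp add: ctx_drop_def plus_fun_apply fun_eq_iff)

lemma ctx_lift_add [simp]: "ctx_lift k (G + H) = ctx_lift k G + ctx_lift k H"
  by (simp add: ctx_lift_def plus_fun_apply fun_eq_iff)

lemma ctx_drop_zero [simp]: "ctx_drop k 0 = 0"
  by (simp add: ctx_drop_def zero_fun_apply fun_eq_iff)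

lemma ctx_lift_zero [simp]: "ctx_lift k 0 = 0"
  by (simp add: ctx_lift_def zero_fun_apply fun_eq_iff)

lemma ctx_drop_0_apply: "ctx_drop 0 G i = G (Suc i)"
  by (simp add: ctx_drop_def)

lemma ctx_drop_Suc_apply_0 [simp]: "ctx_drop (Suc k) G 0 = G 0"
  by (simp add: ctx_drop_def)

lemma ctx_lift_Suc_apply_0 [simp]: "ctx_lift (Suc k) G 0 = G 0"
  by (simp add: ctx_lift_def)

lemma ctx_lift_apply_same [simp]: "ctx_lift k G k = {#}"
  by (simp add: ctx_lift_def)

lemma ctx_drop_0_ctx_drop_Suc [simp]: "ctx_drop 0 (ctx_drop (Suc k) G) = ctx_drop k (ctx_drop 0 G)"
  by (simp add: ctx_drop_def fun_eq_iff)

lemma ctx_drop_0_ctx_lift_Suc [simp]: "ctx_drop 0 (ctx_lift (Suc k) G) = ctx_lift k (ctx_drop 0 G)"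
  by (simp add: ctx_drop_def ctx_lift_def fun_eq_iff)

lemma ctx_drop_ctx_lift [simp]: "ctx_drop k (ctx_lift k G) = G"
  by (simp add: ctx_drop_def ctx_lift_def fun_eq_iff)

lemma ctx_lift_single: "ctx_lift k (ctx_single i s) = ctx_single (if i < k then i else Suc i) s"
  by (auto simp add: ctx_lift_def ctx_single_def fun_eq_iff)

lemma ctx_drop_single:
  "i \<noteq> k \<Longrightarrow> ctx_drop k (ctx_single i s) = ctx_single (if k < i then i - 1 else i) s"
  by (auto simp add: ctx_drop_def ctx_single_def fun_eq_iff)

lemma ctx_drop_single_same [simp]: "ctx_drop k (ctx_single k s) = 0"
  by (auto simp add: ctx_drop_def ctx_single_def zero_fun_apply fun_eq_iff)

lemma ctx_single_apply: "ctx_single i s k = (if k = i then {#s#} else {#})"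
  by (simp add: ctx_single_def)

lemma ctx_sub_refl [simp]: "ctx_sub G G"
  by (simp add: ctx_sub_def)

lemma ctx_sub_trans: "ctx_sub G H \<Longrightarrow> ctx_sub H K \<Longrightarrow> ctx_sub G K"
  by (meson ctx_sub_def subset_mset.order_trans)

lemma ctx_sub_add_mono: "ctx_sub G G' \<Longrightarrow> ctx_sub H H' \<Longrightarrow> ctx_sub (G + H) (G' + H')"
  by (simp add: ctx_sub_def plus_fun_apply subset_mset.add_mono)

lemma ctx_sub_add_right [simp]: "ctx_sub G (G + H)"
  by (simp add: ctx_sub_def plus_fun_apply)

lemma ctx_sub_drop_0: "ctx_sub G H \<Longrightarrow> ctx_sub (ctx_drop 0 G) (ctx_drop 0 H)"
  by (simp add: ctx_sub_def ctx_drop_0_apply)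

lemma ctx_sub_apply: "ctx_sub G H \<Longrightarrow> G i \<subseteq># H i"
  by (simp add: ctx_sub_def)

lemma typing_Var: "typing (ctx_single i s) (Var i) s (Suc 0)"
  using typing_mtyping.var by simp

lemma mtyping_singleI: "typing G t s n \<Longrightarrow> mtyping G t {#s#} n"
  using mcons[OF _ mnil, of G t s n] by simp

lemma mtyping_add: "mtyping G t A n \<Longrightarrow> mtyping H t B m \<Longrightarrow> mtyping (G + H) t (A + B) (n + m)"
proof (induction rule: mtyping_induct)
  case (cons G s n H' A m')
  from mcons[OF cons.hyps(1) cons.IH[OF cons.prems]] show ?case
    by (simp add: add.assoc)
qed simp

lemma mtyping_emptyD: "mtyping G t {#} n \<Longrightarrow> G = 0 \<and> n = 0"
  by (auto elim: mtypingE)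

lemma mtyping_remove:
  assumes "mtyping G t A n" and "s \<in># A"
  shows "\<exists>G1 G2 n1 n2. typing G1 t s n1 \<and> mtyping G2 t (A - {#s#}) n2 \<and> G = G1 + G2 \<and> n = n1 + n2"
  using assms
proof (induction rule: mtyping_induct)
  case (cons G s' n H A m)
  show ?case
  proof (cases "s = s'")
    case False
    with cons.prems obtain G1 G2 n1 n2 where
      "typing G1 t s n1" "mtyping G2 t (A - {#s#}) n2" "H = G1 + G2" "m = n1 + n2"
      using cons.IH by auto
    moreover have "mtyping (G + G2) t (add_mset s' A - {#s#}) (n + n2)"
      using mcons[OF cons(1) \<open>mtyping G2 t (A - {#s#}) n2\<close>] False by simp
    moreover have "G + H = G1 + (G + G2)" "n + m = n1 + (n + n2)"
      using calculation by (simp_all add: add_ac)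
    ultimately show ?thesis by blast
  qed (use cons in auto)
qed simp

lemma mtyping_singleD: "mtyping G t {#s#} n \<Longrightarrow> typing G t s n"
  using mtyping_remove[of G t "{#s#}" n s] mtyping_emptyD by fastforce

lemma mtyping_split:
  "mtyping G t (A + B) n \<Longrightarrow>
   \<exists>G1 G2 n1 n2. mtyping G1 t A n1 \<and> mtyping G2 t B n2 \<and> G = G1 + G2 \<and> n = n1 + n2"
proof (induction A arbitrary: G n)
  case empty
  then show ?case using mnil[of t] by fastforce
next
  case (add s A)
  obtain G1 G2 n1 n2 where
    "typing G1 t s n1" "mtyping G2 t (A + B) n2" "G = G1 + G2" "n = n1 + n2"
    using mtyping_remove[OF add.prems, of s] by auto
  moreover obtain H1 H2 m1 m2 where
    "mtyping H1 t A m1" "mtyping H2 t B m2" "G2 = H1 + H2" "n2 = m1 + m2"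
    using add.IH \<open>mtyping G2 t (A + B) n2\<close> by blast
  ultimately have "G = (G1 + H1) + H2" "n = (n1 + m1) + m2"
    by (simp_all add: add_ac)
  moreover have "mtyping (G1 + H1) t (add_mset s A) (n1 + m1)"
    using \<open>typing G1 t s n1\<close> \<open>mtyping H1 t A m1\<close> by (rule mcons)
  ultimately show ?case using \<open>mtyping H2 t B m2\<close> by blast
qed

lemma mtyping_subset:
  "mtyping G t A n \<Longrightarrow> A' \<subseteq># A \<Longrightarrow>
   \<exists>G1 G2 n1 n2. mtyping G1 t A' n1 \<and> mtyping G2 t (A - A') n2 \<and> G = G1 + G2 \<and> n = n1 + n2"
  using mtyping_split[of G t A' "A - A'" n] by (simp add: subset_mset.add_diff_inverse)

lemma typable_if_mtyping: "mtyping G t A n \<Longrightarrow> A \<noteq> {#} \<Longrightarrow> typable t"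
  unfolding typable_def has_type_def by (induction rule: mtyping_induct) auto

lemma typing_mtyping_lift:
  "typing G t s n \<Longrightarrow> typing (ctx_lift k G) (dB_lift t k) s n"
  "mtyping G t A n \<Longrightarrow> mtyping (ctx_lift k G) (dB_lift t k) A n"
proof (induction arbitrary: k and k rule: typing_mtyping.inducts)
  case (var i s)
  then show ?case by (auto simp: ctx_lift_single intro: typing_Var)
next
  case (lam G t s n M)
  have "typing (ctx_drop 0 (ctx_lift (Suc k) G)) (Lam (dB_lift t (Suc k))) (Arrow M s) (Suc n)"
    by (rule typing_mtyping.lam) (use lam in auto)
  then show ?case by simp
next
  case (app G t A n1 H u B n2 L r s n3 P)
  have "typing (ctx_lift k G + ctx_lift k H + ctx_drop 0 (ctx_lift (Suc k) L))
          (JApp (dB_lift t k) (dB_lift u k) (dB_lift r (Suc k))) s (Suc (n1 + n2 + n3))"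
    by (rule typing_mtyping.app) (use app in auto)
  then show ?case by simp
qed (simp_all add: typing_mtyping.mnil typing_mtyping.mcons)

lemmas mtyping_lift = typing_mtyping_lift(2)

lemma mtyping_unlift_elementwise:
  assumes "mtyping G x A n"
    and "\<And>G s n. typing G x s n \<Longrightarrow> G k = {#} \<and> typing (ctx_drop k G) y s n"
  shows "G k = {#} \<and> mtyping (ctx_drop k G) y A n"
  using assms
  by (induction rule: mtyping_induct)
    (simp_all add: plus_fun_apply[of _ _ k] zero_fun_apply[of k] typing_mtyping.mnil typing_mtyping.mcons)

lemma typing_unlift: "typing G (dB_lift t k) s n \<Longrightarrow> G k = {#} \<and> typing (ctx_drop k G) t s n"
proof (induction t arbitrary: k G s n)
  case (Var i)
  then show ?case
    by (cases "i < k") (auto elim!: typing_VarE simp: ctx_single_apply[of _ _ k] ctx_drop_single typing_Var)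
next
  case (Lam t)
  from Lam.prems obtain G0 s' n0 M where G: "G = ctx_drop 0 G0" and s: "s = Arrow M s'"
    and n: "n = Suc n0" and t: "typing G0 (dB_lift t (Suc k)) s' n0" and "G0 0 \<subseteq># M"
    by (auto elim: typing_LamE)
  from Lam.IH[OF t] have "G0 (Suc k) = {#}" and "typing (ctx_drop (Suc k) G0) t s' n0"
    by blast+
  moreover have "typing (ctx_drop 0 (ctx_drop (Suc k) G0)) (Lam t) (Arrow M s') (Suc n0)"
    by (rule typing_mtyping.lam) (use calculation \<open>G0 0 \<subseteq># M\<close> in auto)
  ultimately show ?case using G s n by (simp add: ctx_drop_0_apply[of _ k])
next
  case (JApp t1 t2 t3)
  from JApp.prems obtain G1 A n1 H1 B n2 L n3 P where 1: "G = G1 + H1 + ctx_drop 0 L"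
    "n = Suc (n1 + n2 + n3)" "mtyping G1 (dB_lift t1 k) A n1" "A \<noteq> {#}"
    "mtyping H1 (dB_lift t2 k) B n2" "B \<noteq> {#}" "typing L (dB_lift t3 (Suc k)) s n3"
    "arrows P \<subseteq># A" "L 0 \<subseteq># image_mset snd P" "sum_mset (image_mset fst P) \<subseteq># B"
    by (auto elim: typing_JAppE)
  have a: "G1 k = {#} \<and> mtyping (ctx_drop k G1) t1 A n1"
    by (rule mtyping_unlift_elementwise[OF 1(3)]) (use JApp.IH(1) in blast)
  have b: "H1 k = {#} \<and> mtyping (ctx_drop k H1) t2 B n2"
    by (rule mtyping_unlift_elementwise[OF 1(5)]) (use JApp.IH(2) in blast)
  have c: "L (Suc k) = {#}" "typing (ctx_drop (Suc k) L) t3 s n3"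
    using JApp.IH(3) 1(7) by blast+
  have "typing (ctx_drop k G1 + ctx_drop k H1 + ctx_drop 0 (ctx_drop (Suc k) L)) (JApp t1 t2 t3) s
          (Suc (n1 + n2 + n3))"
    by (rule typing_mtyping.app) (use a b c 1 in auto)
  then show ?case
    using 1 a b c by (simp add: plus_fun_apply[of _ _ k] ctx_drop_0_apply[of _ k])
qed

lemma mtyping_unlift: "mtyping G (dB_lift t k) A n \<Longrightarrow> G k = {#} \<and> mtyping (ctx_drop k G) t A n"
  using mtyping_unlift_elementwise typing_unlift by blast

lemma typable_unlift: "typable (dB_lift t k) \<Longrightarrow> typable t"
  unfolding typable_def has_type_def using typing_unlift by blast

subsection \<open>Substitution and anti-substitution\<close>

lemma mtyping_subst_elementwise:
  assumes "mtyping G x A n" and "mtyping E u (G k) m"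
    and "\<And>G s n E m. typing G x s n \<Longrightarrow> mtyping E u (G k) m \<Longrightarrow>
           \<exists>n'. typing (ctx_drop k G + E) y s n' \<and> n' \<le> n + m"
  shows "\<exists>n'. mtyping (ctx_drop k G + E) y A n' \<and> n' \<le> n + m"
  using assms
proof (induction arbitrary: E m rule: mtyping_induct)
  case nil
  then have "E = 0" "m = 0"
    using mtyping_emptyD by (auto simp: zero_fun_apply[of k])
  then show ?case by (auto intro: typing_mtyping.mnil)
next
  case (cons G s n H A m' E m)
  from cons.prems(1) have "mtyping E u (G k + H k) m"
    by (simp add: plus_fun_apply[of _ _ k])
  then obtain E1 E2 m1 m2 where E: "mtyping E1 u (G k) m1" "mtyping E2 u (H k) m2"
    "E = E1 + E2" "m = m1 + m2"
    using mtyping_split by blast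
  obtain n1 where n1: "typing (ctx_drop k G + E1) y s n1" "n1 \<le> n + m1"
    using cons.prems(2) cons.hyps(1) E(1) by blast
  obtain n2 where n2: "mtyping (ctx_drop k H + E2) y A n2" "n2 \<le> m' + m2"
    using cons.IH E(2) cons.prems(2) by blast
  from mcons[OF n1(1) n2(1)] E n1(2) n2(2) show ?case
    by (intro exI[of _ "n1 + n2"]) (simp add: add_ac)
qed

lemma typing_subst:
  "typing G t s n \<Longrightarrow> mtyping E u (G k) m \<Longrightarrow>
   \<exists>n'. typing (ctx_drop k G + E) (dB_subst t k u) s n' \<and> n' \<le> n + m"
proof (induction t arbitrary: G s n k u E m)
  case (Var i)
  from Var(1) have G: "G = ctx_single i s" "n = 1"
    by (auto elim: typing_VarE)
  show ?case
  proof (cases "i = k")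
    case True
    then have "typing E u s m"
      using Var(2) G by (simp add: ctx_single_apply[of _ _ k] mtyping_singleD)
    then show ?thesis using True G by auto
  next
    case False
    then have "E = 0" "m = 0"
      using Var(2) G mtyping_emptyD by (auto simp: ctx_single_apply[of _ _ k])
    then show ?thesis using False G by (auto simp: ctx_drop_single intro: typing_Var)
  qed
next
  case (Lam t)
  from Lam.prems(1) obtain G0 s' n0 M where G: "G = ctx_drop 0 G0" and s: "s = Arrow M s'"
    and n: "n = Suc n0" and t: "typing G0 t s' n0" and "G0 0 \<subseteq># M"
    by (auto elim: typing_LamE)
  have "mtyping (ctx_lift 0 E) (dB_lift u 0) (G0 (Suc k)) m"
    using mtyping_lift[OF Lam.prems(2), of 0] G by (simp add: ctx_drop_0_apply)
  then obtain n' where n': "typing (ctx_drop (Suc k) G0 + ctx_lift 0 E)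
      (dB_subst t (Suc k) (dB_lift u 0)) s' n'" "n' \<le> n0 + m"
    using Lam.IH t by blast
  have "typing (ctx_drop 0 (ctx_drop (Suc k) G0 + ctx_lift 0 E))
      (Lam (dB_subst t (Suc k) (dB_lift u 0))) (Arrow M s') (Suc n')"
    by (rule typing_mtyping.lam) (use n' \<open>G0 0 \<subseteq># M\<close> in auto)
  then show ?case using G s n n' by (intro exI[of _ "Suc n'"]) simp
next
  case (JApp t1 t2 t3)
  from JApp.prems(1) obtain G1 A n1 H1 B n2 L n3 P where 1: "G = G1 + H1 + ctx_drop 0 L"
    "n = Suc (n1 + n2 + n3)" "mtyping G1 t1 A n1" "A \<noteq> {#}" "mtyping H1 t2 B n2" "B \<noteq> {#}"
    "typing L t3 s n3" "arrows P \<subseteq># A" "L 0 \<subseteq># image_mset snd P"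
    "sum_mset (image_mset fst P) \<subseteq># B"
    by (auto elim: typing_JAppE)
  from JApp.prems(2) 1 have "mtyping E u (G1 k + H1 k + L (Suc k)) m"
    by (simp add: plus_fun_apply[of _ _ k] ctx_drop_0_apply[of _ k])
  then obtain E12 E3 m12 m3 where E: "mtyping E12 u (G1 k + H1 k) m12"
    "mtyping E3 u (L (Suc k)) m3" "E = E12 + E3" "m = m12 + m3"
    using mtyping_split by blast
  then obtain E1 E2 m1 m2 where E12: "mtyping E1 u (G1 k) m1" "mtyping E2 u (H1 k) m2"
    "E12 = E1 + E2" "m12 = m1 + m2"
    using mtyping_split by blast
  obtain k1 where k1: "mtyping (ctx_drop k G1 + E1) (dB_subst t1 k u) A k1" "k1 \<le> n1 + m1"
    using mtyping_subst_elementwise[OF 1(3) E12(1)] JApp.IH(1) by blast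
  obtain k2 where k2: "mtyping (ctx_drop k H1 + E2) (dB_subst t2 k u) B k2" "k2 \<le> n2 + m2"
    using mtyping_subst_elementwise[OF 1(5) E12(2)] JApp.IH(2) by blast
  have "mtyping (ctx_lift 0 E3) (dB_lift u 0) (L (Suc k)) m3"
    using mtyping_lift[OF E(2), of 0] by simp
  then obtain k3 where k3: "typing (ctx_drop (Suc k) L + ctx_lift 0 E3)
      (dB_subst t3 (Suc k) (dB_lift u 0)) s k3" "k3 \<le> n3 + m3"
    using JApp.IH(3) 1(7) by blast
  have "typing ((ctx_drop k G1 + E1) + (ctx_drop k H1 + E2) + ctx_drop 0 (ctx_drop (Suc k) L + ctx_lift 0 E3))
          (JApp (dB_subst t1 k u) (dB_subst t2 k u) (dB_subst t3 (Suc k) (dB_lift u 0))) s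
          (Suc (k1 + k2 + k3))"
    by (rule typing_mtyping.app[OF k1(1) 1(4) k2(1) 1(6) k3(1) 1(8)]) (use 1 in auto)
  then show ?case using 1 E E12 k1 k2 k3
    by (intro exI[of _ "Suc (k1 + k2 + k3)"]) (simp add: add_ac)
qed

lemma mtyping_antisubst_elementwise:
  assumes "mtyping G x A n"
    and "\<And>G s n. typing G x s n \<Longrightarrow>
           \<exists>G' E n' m. typing G' y s n' \<and> mtyping E u (G' k) m \<and> G = ctx_drop k G' + E"
  shows "\<exists>G' E n' m. mtyping G' y A n' \<and> mtyping E u (G' k) m \<and> G = ctx_drop k G' + E"
  using assms
proof (induction rule: mtyping_induct)
  case nil
  have "mtyping 0 y {#} 0" "mtyping 0 u ((0 :: tctx) k) 0" "(0 :: tctx) = ctx_drop k 0 + 0"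
    by (simp_all add: zero_fun_apply typing_mtyping.mnil)
  then show ?case by blast
next
  case (cons G s n H A m)
  obtain G1 E1 n1 m1 where 1: "typing G1 y s n1" "mtyping E1 u (G1 k) m1" "G = ctx_drop k G1 + E1"
    using cons.prems cons.hyps(1) by blast
  obtain G2 E2 n2 m2 where 2: "mtyping G2 y A n2" "mtyping E2 u (G2 k) m2" "H = ctx_drop k G2 + E2"
    using cons.IH cons.prems by blast
  have "mtyping (G1 + G2) y (add_mset s A) (n1 + n2)"
    using 1 2 by (simp add: typing_mtyping.mcons)
  moreover have "mtyping (E1 + E2) u ((G1 + G2) k) (m1 + m2)"
    using mtyping_add[OF 1(2) 2(2)] by (simp add: plus_fun_apply[of _ _ k])
  moreover have "G + H = ctx_drop k (G1 + G2) + (E1 + E2)"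
    using 1 2 by (simp add: add_ac)
  ultimately show ?case by blast
qed

lemma typing_antisubst:
  "typing G (dB_subst t k u) s n \<Longrightarrow>
   \<exists>G' E n' m. typing G' t s n' \<and> mtyping E u (G' k) m \<and> G = ctx_drop k G' + E"
proof (induction t arbitrary: G s n k u)
  case (Var i)
  have "typing (ctx_single i s) (Var i) s 1"
    by (rule typing_mtyping.var)
  moreover consider "i \<noteq> k" "G = ctx_single (if k < i then i - 1 else i) s" | "i = k" "typing G u s n"
    using Var by (cases "i = k") (auto elim: typing_VarE split: if_split_asm)
  then have "\<exists>E m. mtyping E u (ctx_single i s k) m \<and> G = ctx_drop k (ctx_single i s) + E"
  proof cases
    case 1
    then show ?thesis
      using typing_mtyping.mnil[of u] by (auto simp: ctx_single_apply[of _ _ k] ctx_drop_single)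
  next
    case 2
    then show ?thesis by (auto simp: ctx_single_apply[of _ _ k] intro: mtyping_singleI)
  qed
  ultimately show ?case by blast
next
  case (Lam t)
  from Lam.prems obtain G0 s' n0 M where G: "G = ctx_drop 0 G0" and s: "s = Arrow M s'"
    and n: "n = Suc n0" and t: "typing G0 (dB_subst t (Suc k) (dB_lift u 0)) s' n0"
    and "G0 0 \<subseteq># M"
    by (auto elim: typing_LamE)
  then obtain G0' E0 n1 m where h: "typing G0' t s' n1" "mtyping E0 (dB_lift u 0) (G0' (Suc k)) m"
    "G0 = ctx_drop (Suc k) G0' + E0"
    using Lam.IH by blast
  have u: "E0 0 = {#}" "mtyping (ctx_drop 0 E0) u (G0' (Suc k)) m"
    using mtyping_unlift[OF h(2)] by auto
  have "typing (ctx_drop 0 G0') (Lam t) (Arrow M s') (Suc n1)"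
    by (rule typing_mtyping.lam[OF h(1)]) (use \<open>G0 0 \<subseteq># M\<close> h u in auto)
  moreover have "G = ctx_drop k (ctx_drop 0 G0') + ctx_drop 0 E0"
    using G h by simp
  ultimately show ?case
    using u(2) s unfolding ctx_drop_0_apply[of G0' k, symmetric] by blast
next
  case (JApp t1 t2 t3)
  from JApp.prems obtain G1 A n1 H1 B n2 L n3 P where 1: "G = G1 + H1 + ctx_drop 0 L"
    "n = Suc (n1 + n2 + n3)" "mtyping G1 (dB_subst t1 k u) A n1" "A \<noteq> {#}"
    "mtyping H1 (dB_subst t2 k u) B n2" "B \<noteq> {#}" "typing L (dB_subst t3 (Suc k) (dB_lift u 0)) s n3"
    "arrows P \<subseteq># A" "L 0 \<subseteq># image_mset snd P" "sum_mset (image_mset fst P) \<subseteq># B"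
    by (auto elim: typing_JAppE)
  obtain G1' E1 k1 m1 where a: "mtyping G1' t1 A k1" "mtyping E1 u (G1' k) m1" "G1 = ctx_drop k G1' + E1"
    using mtyping_antisubst_elementwise[OF 1(3)] JApp.IH(1) by blast
  obtain H1' E2 k2 m2 where b: "mtyping H1' t2 B k2" "mtyping E2 u (H1' k) m2" "H1 = ctx_drop k H1' + E2"
    using mtyping_antisubst_elementwise[OF 1(5)] JApp.IH(2) by blast
  obtain L' E3 k3 m3 where c: "typing L' t3 s k3" "mtyping E3 (dB_lift u 0) (L' (Suc k)) m3"
    "L = ctx_drop (Suc k) L' + E3"
    using JApp.IH(3) 1(7) by blast
  have u: "E3 0 = {#}" "mtyping (ctx_drop 0 E3) u (L' (Suc k)) m3"
    using mtyping_unlift[OF c(2)] by auto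
  have "typing (G1' + H1' + ctx_drop 0 L') (JApp t1 t2 t3) s (Suc (k1 + k2 + k3))"
    by (rule typing_mtyping.app[OF a(1) 1(4) b(1) 1(6) c(1) 1(8)]) (use 1 c u in auto)
  moreover have "mtyping (E1 + E2 + ctx_drop 0 E3) u ((G1' + H1' + ctx_drop 0 L') k) (m1 + m2 + m3)"
    using mtyping_add[OF mtyping_add[OF a(2) b(2)] u(2)]
    by (simp add: plus_fun_apply[of _ _ k] ctx_drop_0_apply[of _ k])
  moreover have "G = ctx_drop k (G1' + H1' + ctx_drop 0 L') + (E1 + E2 + ctx_drop 0 E3)"
    using 1 a b c by (simp add: add_ac)
  ultimately show ?case by blast
qed

section \<open>Typable terms are strongly normalising\<close>

lemma subseteq_image_mset_ex: "N \<subseteq># image_mset f P \<Longrightarrow> \<exists>P'. P' \<subseteq># P \<and> image_mset f P' = N"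
proof (induction N arbitrary: P)
  case (add y N)
  then have "y \<in># image_mset f P"
    by (simp add: insert_subset_eq_iff)
  then obtain x where x: "x \<in># P" "f x = y"
    by auto
  with add.prems have "N \<subseteq># image_mset f (P - {#x#})"
    by (simp add: image_mset_Diff insert_subset_eq_iff)
  then obtain P' where "P' \<subseteq># P - {#x#}" "image_mset f P' = N"
    using add.IH by blast
  with x show ?case
    by (intro exI[of _ "add_mset x P'"]) (auto simp: insert_subset_eq_iff)
qed simp

lemma sum_mset_image_mset_subseteq_mono:
  "P' \<subseteq># P \<Longrightarrow> sum_mset (image_mset f P') \<subseteq># sum_mset (image_mset f P)"
  by (auto simp: subset_mset.le_iff_add)

lemma arrows_empty [simp]: "arrows {#} = {#}"
  and arrows_add_mset [simp]: "arrows (add_mset (M, s) P) = add_mset (Arrow M s) (arrows P)"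
  by (simp_all add: arrows_def)

lemma typing_contrD:
  "typing G (plugD D (Lam t)) (Arrow M s) n \<Longrightarrow> mtyping H u M m \<Longrightarrow>
   \<exists>G' n'. typing G' (contrD D t u) s n' \<and> n' \<le> n + m \<and> ctx_sub G' (G + H)"
proof (induction D arbitrary: G n u H m)
  case Nil
  from Nil.prems(1) obtain G0 n0 where G: "G = ctx_drop 0 G0" and n: "n = Suc n0"
    and t: "typing G0 t s n0" and "G0 0 \<subseteq># M"
    by (auto elim: typing_LamE)
  obtain H1 H2 m1 m2 where H: "mtyping H1 u (G0 0) m1" "H = H1 + H2" "m = m1 + m2"
    using mtyping_subset[OF Nil.prems(2) \<open>G0 0 \<subseteq># M\<close>] by blast
  obtain n' where "typing (ctx_drop 0 G0 + H1) (dB_subst t 0 u) s n'" "n' \<le> n0 + m1"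
    using typing_subst[OF t H(1)] by blast
  moreover have "ctx_sub (ctx_drop 0 G0 + H1) (ctx_drop 0 G0 + (H1 + H2))"
    by (rule ctx_sub_add_mono) simp_all
  ultimately show ?case
    using G n H by (intro exI[of _ "ctx_drop 0 G0 + H1"] exI[of _ n']) (auto simp: contrD_Nil)
next
  case (Cons p D)
  obtain a b where p: "p = (a, b)" by (cases p)
  from Cons.prems(1) p obtain G1 A n1 H1 B n2 L n3 P where 1: "G = G1 + H1 + ctx_drop 0 L"
    "n = Suc (n1 + n2 + n3)" "mtyping G1 a A n1" "A \<noteq> {#}" "mtyping H1 b B n2" "B \<noteq> {#}"
    "typing L (plugD D (Lam t)) (Arrow M s) n3" "arrows P \<subseteq># A" "L 0 \<subseteq># image_mset snd P"
    "sum_mset (image_mset fst P) \<subseteq># B"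
    by (auto elim: typing_JAppE)
  have "mtyping (ctx_lift 0 H) (dB_lift u 0) M m"
    using mtyping_lift[OF Cons.prems(2), of 0] by simp
  then obtain L' n3' where L': "typing L' (contrD D t (dB_lift u 0)) s n3'" "n3' \<le> n3 + m"
    "ctx_sub L' (L + ctx_lift 0 H)"
    using Cons.IH 1(7) by blast
  have "L' 0 \<subseteq># L 0"
    using ctx_sub_apply[OF L'(3), of 0] by simp
  then have "typing (G1 + H1 + ctx_drop 0 L') (JApp a b (contrD D t (dB_lift u 0))) s
      (Suc (n1 + n2 + n3'))"
    using 1 by (intro typing_mtyping.app[OF 1(3-6) L'(1) 1(8)]) (auto intro: subset_mset.order_trans)
  moreover have "ctx_sub (G1 + H1 + ctx_drop 0 L') (G1 + H1 + ctx_drop 0 L + H)"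
    using ctx_sub_drop_0[OF L'(3)] by (simp add: add.assoc ctx_sub_add_mono)
  ultimately show ?case
    using 1 L' p
    by (intro exI[of _ "G1 + H1 + ctx_drop 0 L'"] exI[of _ "Suc (n1 + n2 + n3')"]) (auto simp: contrD_Cons)
qed

lemma mtyping_contrD:
  "mtyping G (plugD D (Lam t)) (arrows P) n \<Longrightarrow> mtyping H u (sum_mset (image_mset fst P)) m \<Longrightarrow>
   \<exists>G' n'. mtyping G' (contrD D t u) (image_mset snd P) n' \<and> n' \<le> n + m \<and> ctx_sub G' (G + H)"
proof (induction P arbitrary: G n H m)
  case empty
  then have "G = 0" "n = 0" "H = 0" "m = 0"
    by (auto dest: mtyping_emptyD)
  then show ?case
    using typing_mtyping.mnil by fastforce
next
  case (add x P)
  obtain M s where x: "x = (M, s)" by (cases x)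
  obtain G1 G2 n1 n2 where G: "typing G1 (plugD D (Lam t)) (Arrow M s) n1"
    "mtyping G2 (plugD D (Lam t)) (arrows P) n2" "G = G1 + G2" "n = n1 + n2"
    using mtyping_remove[OF add.prems(1), of "Arrow M s"] x by auto
  have "mtyping H u (M + sum_mset (image_mset fst P)) m"
    using add.prems(2) x by simp
  then obtain H1 H2 m1 m2 where H: "mtyping H1 u M m1"
    "mtyping H2 u (sum_mset (image_mset fst P)) m2" "H = H1 + H2" "m = m1 + m2"
    using mtyping_split by blast
  obtain G1' k1 where 1: "typing G1' (contrD D t u) s k1" "k1 \<le> n1 + m1" "ctx_sub G1' (G1 + H1)"
    using typing_contrD[OF G(1) H(1)] by blast
  obtain G2' k2 where 2: "mtyping G2' (contrD D t u) (image_mset snd P) k2" "k2 \<le> n2 + m2"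
    "ctx_sub G2' (G2 + H2)"
    using add.IH[OF G(2) H(2)] by blast
  have "mtyping (G1' + G2') (contrD D t u) (add_mset s (image_mset snd P)) (k1 + k2)"
    using mcons[OF 1(1) 2(1)] .
  moreover have "ctx_sub (G1' + G2') (G + H)"
    using ctx_sub_add_mono[OF 1(3) 2(3)] G H by (simp add: add_ac)
  ultimately show ?case
    using 1 2 G H by (intro exI[of _ "G1' + G2'"] exI[of _ "k1 + k2"]) (simp add: x)
qed

lemma typing_root_reduct:
  assumes "typing G (JApp (plugD D (Lam t)) u r) s n"
  shows "\<exists>G' n'. typing G' (dB_subst r 0 (contrD D t u)) s n' \<and> n' < n \<and> ctx_sub G' G"
proof -
  from assms obtain G1 A n1 H1 B n2 L n3 P where 1: "G = G1 + H1 + ctx_drop 0 L"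
    "n = Suc (n1 + n2 + n3)" "mtyping G1 (plugD D (Lam t)) A n1" "A \<noteq> {#}" "mtyping H1 u B n2"
    "B \<noteq> {#}" "typing L r s n3" "arrows P \<subseteq># A" "L 0 \<subseteq># image_mset snd P"
    "sum_mset (image_mset fst P) \<subseteq># B"
    by (auto elim: typing_JAppE)
  \<comment> \<open>only the arrows whose targets are used for y in r are kept; the rest is erased\<close>
  obtain P' where P': "P' \<subseteq># P" "image_mset snd P' = L 0"
    using subseteq_image_mset_ex[OF 1(9)] by blast
  have "arrows P' \<subseteq># A"
    using P'(1) 1(8) unfolding arrows_def by (meson image_mset_subseteq_mono subset_mset.order_trans)
  then obtain Ga Gb na nb where a: "mtyping Ga (plugD D (Lam t)) (arrows P') na" "G1 = Ga + Gb"
    "n1 = na + nb"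
    using mtyping_subset[OF 1(3)] by blast
  have "sum_mset (image_mset fst P') \<subseteq># B"
    using sum_mset_image_mset_subseteq_mono[OF P'(1)] 1(10) by (meson subset_mset.order_trans)
  then obtain Ha Hb ma mb where b: "mtyping Ha u (sum_mset (image_mset fst P')) ma" "H1 = Ha + Hb"
    "n2 = ma + mb"
    using mtyping_subset[OF 1(5)] by blast
  obtain G' n' where c: "mtyping G' (contrD D t u) (L 0) n'" "n' \<le> na + ma" "ctx_sub G' (Ga + Ha)"
    using mtyping_contrD[OF a(1) b(1)] P'(2) by auto
  obtain n'' where d: "typing (ctx_drop 0 L + G') (dB_subst r 0 (contrD D t u)) s n''" "n'' \<le> n3 + n'"
    using typing_subst[OF 1(7) c(1)] by blast
  have "ctx_sub G' (G1 + H1)"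
    using c(3) a(2) b(2) ctx_sub_add_mono[OF ctx_sub_add_right ctx_sub_add_right] ctx_sub_trans by blast
  then have "ctx_sub (ctx_drop 0 L + G') (ctx_drop 0 L + (G1 + H1))"
    by (rule ctx_sub_add_mono[OF ctx_sub_refl])
  moreover have "ctx_drop 0 L + (G1 + H1) = G"
    using 1(1) by (simp add: add_ac)
  ultimately have "ctx_sub (ctx_drop 0 L + G') G"
    by simp
  with d c a b 1 show ?thesis
    by (intro exI[of _ "ctx_drop 0 L + G'"] exI[of _ n'']) auto
qed

lemma mtyping_reduct_elementwise:
  assumes "mtyping G x A n"
    and "\<And>G s n. typing G x s n \<Longrightarrow> \<exists>G' n'. typing G' y s n' \<and> n' < n \<and> ctx_sub G' G"
  shows "\<exists>G' n'. mtyping G' y A n' \<and> n' \<le> n \<and> (A \<noteq> {#} \<longrightarrow> n' < n) \<and> ctx_sub G' G"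
  using assms
proof (induction rule: mtyping_induct)
  case nil
  then show ?case using typing_mtyping.mnil by fastforce
next
  case (cons G s n H A m)
  obtain G1 n1 where 1: "typing G1 y s n1" "n1 < n" "ctx_sub G1 G"
    using cons.prems cons.hyps(1) by blast
  obtain G2 n2 where 2: "mtyping G2 y A n2" "n2 \<le> m" "ctx_sub G2 H"
    using cons.IH cons.prems by blast
  show ?case
    using mcons[OF 1(1) 2(1)] 1 2 ctx_sub_add_mono[OF 1(3) 2(3)] by fastforce
qed

lemma typing_dbeta:
  "dbeta t t' \<Longrightarrow> typing G t s n \<Longrightarrow> \<exists>G' n'. typing G' t' s n' \<and> n' < n \<and> ctx_sub G' G"
proof (induction arbitrary: G s n rule: dbeta.induct)
  case (root D t u r)
  then show ?case by (rule typing_root_reduct)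
next
  case (lam t t')
  from lam.prems obtain G0 s' n0 M where G: "G = ctx_drop 0 G0" and s: "s = Arrow M s'"
    and n: "n = Suc n0" and t: "typing G0 t s' n0" and M: "G0 0 \<subseteq># M"
    by (auto elim: typing_LamE)
  obtain G0' n0' where h: "typing G0' t' s' n0'" "n0' < n0" "ctx_sub G0' G0"
    using lam.IH t by blast
  have "typing (ctx_drop 0 G0') (Lam t') (Arrow M s') (Suc n0')"
    using h(1) subset_mset.order_trans[OF ctx_sub_apply[OF h(3)] M] by (rule typing_mtyping.lam)
  then show ?case using G s n h ctx_sub_drop_0 by auto
next
  case (app1 t t' u r)
  from app1.prems obtain G1 A n1 H1 B n2 L n3 P where 1: "G = G1 + H1 + ctx_drop 0 L"
    "n = Suc (n1 + n2 + n3)" "mtyping G1 t A n1" "A \<noteq> {#}" "mtyping H1 u B n2" "B \<noteq> {#}"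
    "typing L r s n3" "arrows P \<subseteq># A" "L 0 \<subseteq># image_mset snd P"
    "sum_mset (image_mset fst P) \<subseteq># B"
    by (auto elim: typing_JAppE)
  obtain G1' n1' where h: "mtyping G1' t' A n1'" "n1' < n1" "ctx_sub G1' G1"
    using mtyping_reduct_elementwise[OF 1(3)] app1.IH 1(4) by blast
  have "typing (G1' + H1 + ctx_drop 0 L) (JApp t' u r) s (Suc (n1' + n2 + n3))"
    by (rule typing_mtyping.app[OF h(1) 1(4-10)])
  moreover have "ctx_sub (G1' + H1 + ctx_drop 0 L) G"
    unfolding 1(1) by (intro ctx_sub_add_mono ctx_sub_refl h(3))
  moreover have "Suc (n1' + n2 + n3) < n"
    using h(2) 1(2) by simp
  ultimately show ?case by blast
next
  case (app2 u u' t r)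
  from app2.prems obtain G1 A n1 H1 B n2 L n3 P where 1: "G = G1 + H1 + ctx_drop 0 L"
    "n = Suc (n1 + n2 + n3)" "mtyping G1 t A n1" "A \<noteq> {#}" "mtyping H1 u B n2" "B \<noteq> {#}"
    "typing L r s n3" "arrows P \<subseteq># A" "L 0 \<subseteq># image_mset snd P"
    "sum_mset (image_mset fst P) \<subseteq># B"
    by (auto elim: typing_JAppE)
  obtain H1' n2' where h: "mtyping H1' u' B n2'" "n2' < n2" "ctx_sub H1' H1"
    using mtyping_reduct_elementwise[OF 1(5)] app2.IH 1(6) by blast
  have "typing (G1 + H1' + ctx_drop 0 L) (JApp t u' r) s (Suc (n1 + n2' + n3))"
    by (rule typing_mtyping.app[OF 1(3) 1(4) h(1) 1(6-10)])
  moreover have "ctx_sub (G1 + H1' + ctx_drop 0 L) G"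
    unfolding 1(1) by (intro ctx_sub_add_mono ctx_sub_refl h(3))
  moreover have "Suc (n1 + n2' + n3) < n"
    using h(2) 1(2) by simp
  ultimately show ?case by blast
next
  case (app3 r r' t u)
  from app3.prems obtain G1 A n1 H1 B n2 L n3 P where 1: "G = G1 + H1 + ctx_drop 0 L"
    "n = Suc (n1 + n2 + n3)" "mtyping G1 t A n1" "A \<noteq> {#}" "mtyping H1 u B n2" "B \<noteq> {#}"
    "typing L r s n3" "arrows P \<subseteq># A" "L 0 \<subseteq># image_mset snd P"
    "sum_mset (image_mset fst P) \<subseteq># B"
    by (auto elim: typing_JAppE)
  obtain L' n3' where h: "typing L' r' s n3'" "n3' < n3" "ctx_sub L' L"
    using app3.IH 1(7) by blast
  have "L' 0 \<subseteq># image_mset snd P"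
    using subset_mset.order_trans[OF ctx_sub_apply[OF h(3)] 1(9)] .
  then have "typing (G1 + H1 + ctx_drop 0 L') (JApp t u r') s (Suc (n1 + n2 + n3'))"
    by (rule typing_mtyping.app[OF 1(3-6) h(1) 1(8) _ 1(10)])
  moreover have "ctx_sub (G1 + H1 + ctx_drop 0 L') G"
    unfolding 1(1) by (intro ctx_sub_add_mono ctx_sub_refl ctx_sub_drop_0 h(3))
  moreover have "Suc (n1 + n2 + n3') < n"
    using h(2) 1(2) by simp
  ultimately show ?case by blast
qed

lemma SN_dbeta_if_typable:
  assumes "typable t"
  shows "SN_dbeta t"
  unfolding SN_dbeta_def
proof
  assume "\<exists>f. f 0 = t \<and> (\<forall>i. dbeta (f i) (f (Suc i)))"
  then obtain f where f: "f 0 = t" "\<And>i. dbeta (f i) (f (Suc i))" by blast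
  from assms obtain G s n where t: "typing G t s n"
    unfolding typable_def has_type_def by blast
  have "\<exists>G' n'. typing G' (f i) s n' \<and> n' + i \<le> n" for i
  proof (induction i)
    case (Suc i)
    then obtain G' n' where "typing G' (f i) s n'" "n' + i \<le> n" by blast
    moreover obtain G'' n'' where "typing G'' (f (Suc i)) s n''" "n'' < n'"
      using typing_dbeta[OF f(2) \<open>typing G' (f i) s n'\<close>] by blast
    ultimately show ?case by (intro exI[of _ G''] exI[of _ n'']) simp
  qed (use t f in auto)
  from this[of "Suc n"] show False by auto
qed

section \<open>Inductively strongly normalising terms are typable\<close>

lemma mtyping_if_has_all_types: "(\<And>s. has_type t s) \<Longrightarrow> \<exists>G n. mtyping G t A n"
proof (induction A)
  case empty
  then show ?case using typing_mtyping.mnil by blast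
next
  case (add s A)
  then show ?case
    unfolding has_type_def using typing_mtyping.mcons by blast
qed

lemma has_type_JAppI:
  assumes "\<And>s. has_type t s" and "typable u" and "has_type r s"
  shows "has_type (JApp t u r) s"
proof -
  obtain L n3 where r: "typing L r s n3"
    using assms(3) unfolding has_type_def by blast
  \<comment> \<open>the head only needs the types \<open>{#} \<Rightarrow> s'\<close>, plus one more to be typed at all\<close>
  define P where "P = image_mset (\<lambda>s'. ({#} :: ty multiset, s')) (L 0)"
  obtain G n1 where t: "mtyping G t (arrows P + {#Base#}) n1"
    using mtyping_if_has_all_types assms(1) by blast
  obtain H su n2 where "typing H u su n2"
    using assms(2) unfolding typable_def has_type_def by blast
  then have u: "mtyping H u {#su#} n2" by (rule mtyping_singleI)
  have P: "image_mset snd P = L 0" "sum_mset (image_mset fst P) = {#}"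
    by (simp_all add: P_def multiset.map_comp o_def)
  have "typing (G + H + ctx_drop 0 L) (JApp t u r) s (Suc (n1 + n2 + n3))"
    by (rule typing_mtyping.app[where P = P, OF t _ u _ r]) (simp_all add: P)
  then show ?thesis unfolding has_type_def by blast
qed

lemma has_type_JAppD:
  assumes "has_type (JApp t u r) s"
  shows "typable t" and "typable u" and "has_type r s"
proof -
  from assms obtain G1 A n1 H1 B n2 L n3 where "mtyping G1 t A n1" "A \<noteq> {#}" "mtyping H1 u B n2"
    "B \<noteq> {#}" "typing L r s n3"
    unfolding has_type_def by (auto elim: typing_JAppE)
  then show "typable t" "typable u" "has_type r s"
    unfolding has_type_def by (auto intro: typable_if_mtyping)
qed

lemma neutral_has_type: "neutral t \<Longrightarrow> typable t \<Longrightarrow> has_type t s"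
proof (induction t arbitrary: s rule: neutral.induct)
  case (1 i)
  then show ?case
    unfolding has_type_def using typing_mtyping.var by blast
next
  case (2 n n' u)
  then obtain s0 where "has_type (JApp n u n') s0"
    unfolding typable_def by blast
  then have "typable n" "typable u" "typable n'"
    using has_type_JAppD unfolding typable_def by blast+
  with 2 show ?case by (intro has_type_JAppI) auto
qed

lemma typing_contrD_expand:
  "typing G (contrD D s u) ty n \<Longrightarrow>
   \<exists>G' M H n' m. typing G' (plugD D (Lam s)) (Arrow M ty) n' \<and> mtyping H u M m \<and> G = G' + H"
proof (induction D arbitrary: u G ty n)
  case Nil
  then obtain G0 H n1 m where h: "typing G0 s ty n1" "mtyping H u (G0 0) m" "G = ctx_drop 0 G0 + H"
    using typing_antisubst by (fastforce simp: contrD_Nil)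
  have "typing (ctx_drop 0 G0) (Lam s) (Arrow (G0 0) ty) (Suc n1)"
    using h(1) by (rule typing_mtyping.lam) simp
  with h show ?case by auto
next
  case (Cons p D)
  obtain a b where p: "p = (a, b)" by (cases p)
  from Cons.prems p obtain G1 A n1 H1 B n2 L n3 P where 1: "G = G1 + H1 + ctx_drop 0 L"
    "n = Suc (n1 + n2 + n3)" "mtyping G1 a A n1" "A \<noteq> {#}" "mtyping H1 b B n2" "B \<noteq> {#}"
    "typing L (contrD D s (dB_lift u 0)) ty n3" "arrows P \<subseteq># A" "L 0 \<subseteq># image_mset snd P"
    "sum_mset (image_mset fst P) \<subseteq># B"
    by (auto simp: contrD_Cons elim: typing_JAppE)
  obtain L1 M H n1' m where h: "typing L1 (plugD D (Lam s)) (Arrow M ty) n1'"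
    "mtyping H (dB_lift u 0) M m" "L = L1 + H"
    using Cons.IH[OF 1(7)] by blast
  have u: "H 0 = {#}" "mtyping (ctx_drop 0 H) u M m"
    using mtyping_unlift[OF h(2)] by auto
  have "typing (G1 + H1 + ctx_drop 0 L1) (JApp a b (plugD D (Lam s))) (Arrow M ty)
      (Suc (n1 + n2 + n1'))"
    by (rule typing_mtyping.app[OF 1(3-6) h(1) 1(8)]) (use 1 h u in auto)
  moreover have "G = (G1 + H1 + ctx_drop 0 L1) + ctx_drop 0 H"
    using 1 h by (simp add: add_ac)
  ultimately show ?case using u p by auto
qed

lemma mtyping_contrD_expand:
  "mtyping G (contrD D s u) N n \<Longrightarrow>
   \<exists>P G' H n' m. mtyping G' (plugD D (Lam s)) (arrows P) n' \<and>
     mtyping H u (sum_mset (image_mset fst P)) m \<and> image_mset snd P = N"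
proof (induction rule: mtyping_induct)
  case nil
  then show ?case using typing_mtyping.mnil by (intro exI[of _ "{#}"]) auto
next
  case (cons G ty n H A m)
  obtain G1 M H1 n1 m1 where 1: "typing G1 (plugD D (Lam s)) (Arrow M ty) n1" "mtyping H1 u M m1"
    using typing_contrD_expand[OF cons.hyps(1)] by blast
  obtain P G2 H2 n2 m2 where 2: "mtyping G2 (plugD D (Lam s)) (arrows P) n2"
    "mtyping H2 u (sum_mset (image_mset fst P)) m2" "image_mset snd P = A"
    using cons.IH by blast
  have "mtyping (G1 + G2) (plugD D (Lam s)) (arrows (add_mset (M, ty) P)) (n1 + n2)"
    using mcons[OF 1(1) 2(1)] by simp
  moreover have "mtyping (H1 + H2) u (sum_mset (image_mset fst (add_mset (M, ty) P))) (m1 + m2)"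
    using mtyping_add[OF 1(2) 2(2)] by simp
  ultimately show ?case using 2(3) by (intro exI[of _ "add_mset (M, ty) P"]) auto
qed

lemma typable_plugD_Lam_if_open_body: "typable (open_body D s) \<Longrightarrow> typable (plugD D (Lam s))"
proof -
  assume "typable (open_body D s)"
  then obtain G ty n where
    "typing G (contrD (liftD 0 D) (dB_lift s (Suc (length D))) (Var 0)) ty n"
    unfolding typable_def has_type_def open_body_def by blast
  then obtain G' M n' where "typing G' (plugD (liftD 0 D) (Lam (dB_lift s (Suc (length D))))) (Arrow M ty) n'"
    using typing_contrD_expand by blast
  then have "typable (dB_lift (plugD D (Lam s)) 0)"
    unfolding typable_def has_type_def by (auto simp: dB_lift_plugD)
  then show ?thesis by (rule typable_unlift)
qed

lemma has_type_redex_if_reduct: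
  assumes "has_type (dB_subst r 0 (contrD D s u)) ty"
    and "typable (plugD D (Lam s))" and "typable u"
  shows "has_type (JApp (plugD D (Lam s)) u r) ty"
proof -
  obtain L H n1 m where r: "typing L r ty n1" and "mtyping H (contrD D s u) (L 0) m"
    using assms(1) typing_antisubst unfolding has_type_def by blast
  then obtain P G' H' k1 k2 where P: "mtyping G' (plugD D (Lam s)) (arrows P) k1"
    "mtyping H' u (sum_mset (image_mset fst P)) k2" "image_mset snd P = L 0"
    using mtyping_contrD_expand by blast
  \<comment> \<open>one extra typing of the answer and of the argument makes both multisets nonempty\<close>
  obtain G1 s1 n2 where "typing G1 (plugD D (Lam s)) s1 n2"
    using assms(2) unfolding typable_def has_type_def by blast
  note answer = mtyping_add[OF P(1) mtyping_singleI[OF this]]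
  obtain H1 s2 m2 where "typing H1 u s2 m2"
    using assms(3) unfolding typable_def has_type_def by blast
  note arg = mtyping_add[OF P(2) mtyping_singleI[OF this]]
  have "typing ((G' + G1) + (H' + H1) + ctx_drop 0 L) (JApp (plugD D (Lam s)) u r) ty
      (Suc ((k1 + n2) + (k2 + m2) + n1))"
    by (rule typing_mtyping.app[where P = P, OF answer _ arg _ r]) (use P in auto)
  then show ?thesis unfolding has_type_def by blast
qed

lemma mtyping_transfer_elementwise:
  assumes "mtyping G x A n" and "\<And>G s n. typing G x s n \<Longrightarrow> has_type y s"
  shows "\<exists>G' n'. mtyping G' y A n'"
  using assms
proof (induction rule: mtyping_induct)
  case nil
  then show ?case using typing_mtyping.mnil by blast
next
  case (cons G s n H A m)
  then show ?case unfolding has_type_def using typing_mtyping.mcons by blast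
qed

lemma has_type_plugW_expand:
  assumes "wh_ctx W" and "\<And>s. has_type C s \<Longrightarrow> has_type R s" and "has_type (plugW W C) s"
  shows "has_type (plugW W R) s"
  using assms
proof (induction W arbitrary: s)
  case (WLeft W a b)
  from WLeft.prems(3) obtain G1 A n1 H1 B n2 L n3 P where 1: "mtyping G1 (plugW W C) A n1"
    "A \<noteq> {#}" "mtyping H1 a B n2" "B \<noteq> {#}" "typing L b s n3" "arrows P \<subseteq># A"
    "L 0 \<subseteq># image_mset snd P" "sum_mset (image_mset fst P) \<subseteq># B"
    unfolding has_type_def by (auto elim: typing_JAppE)
  have "has_type (plugW W R) s'" if "typing G (plugW W C) s' n" for G s' n
    using WLeft.IH WLeft.prems(1,2) that unfolding has_type_def by fastforce
  then obtain G1' n1' where "mtyping G1' (plugW W R) A n1'"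
    using mtyping_transfer_elementwise[OF 1(1)] by blast
  then have "typing (G1' + H1 + ctx_drop 0 L) (JApp (plugW W R) a b) s (Suc (n1' + n2 + n3))"
    by (rule typing_mtyping.app[OF _ 1(2-8)])
  then show ?case unfolding has_type_def by auto
next
  case (WRight n a W)
  then have "neutral n" "wh_ctx W" "has_type (JApp n a (plugW W C)) s"
    by auto
  then have "typable n" "typable a" "has_type (plugW W R) s"
    using WRight.IH WRight.prems(2) by (auto dest: has_type_JAppD)
  then show ?case
    using has_type_JAppI neutral_has_type[OF \<open>neutral n\<close>] by simp
qed simp

lemma ISN_imp_typable: "ISN t \<Longrightarrow> typable t \<and> (neutral t \<longrightarrow> (\<forall>s. has_type t s))"
proof (induction rule: ISN.induct)
  case (snvar i)
  then show ?case
    unfolding typable_def has_type_def using typing_mtyping.var by blast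
next
  case (snabs t)
  then obtain G s n where "typing G t s n"
    unfolding typable_def has_type_def by blast
  then have "typing (ctx_drop 0 G) (Lam t) (Arrow (G 0) s) (Suc n)"
    by (rule typing_mtyping.lam) simp
  then show ?case
    unfolding typable_def has_type_def by (auto elim: neutral_LamE)
next
  case (snapp n u r)
  then have "has_type (JApp n u r) s" if "has_type r s" for s
    using that by (blast intro: has_type_JAppI)
  moreover have "neutral r" if "neutral (JApp n u r)"
    using that by (auto elim: neutral_JAppE)
  ultimately show ?case
    using snapp.IH(3) unfolding typable_def by blast
next
  case (snbeta W D r s u)
  have "typable (plugD D (Lam s))"
    using typable_plugD_Lam_if_open_body snbeta.IH(2) by blast
  then have "has_type (JApp (plugD D (Lam s)) u r) ty"
    if "has_type (dB_subst r 0 (contrD D s u)) ty" for ty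
    using has_type_redex_if_reduct that snbeta.IH(3) by blast
  moreover obtain ty where "has_type (plugW W (dB_subst r 0 (contrD D s u))) ty"
    using snbeta.IH(1) unfolding typable_def by blast
  ultimately have "typable (plugW W (JApp (plugD D (Lam s)) u r))"
    using has_type_plugW_expand[OF snbeta.hyps(1)] unfolding typable_def by blast
  then show ?case using not_neutral_plugW_redex by blast
qed

theorem mainTheorem6:
  shows "SN_dbeta t \<longleftrightarrow> ISN t"
proof
  assume "SN_dbeta t"
  then show "ISN t" by (rule SN_dbeta_imp_ISN)
next
  assume "ISN t"
  then show "SN_dbeta t" using ISN_imp_typable SN_dbeta_if_typable by blast
qed

end
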